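(* Let $k,m \in \mathbb{N}$, and let $G$ be an ordered graph with irreducible block decomposition $(G_1, \ldots, G_m)$. If $|\{i \in [m] : G_i \notin \mathcal{J}\}| \geqslant k$, then $S_n(G) \geqslant 2^{n-1}$ for every $n \leqslant k$.
   Context: Ordered graphs of order $n$ have vertex set $[n]$ with the natural order. A pair of vertices $u<v$ separates the edges of $G$ if every edge $ij$ ($i<j$) has $j\leqslant u$ or $v\leqslant i$; $G$ is irreducible if no pair separates its edges. $G_1+\dots+G_m$ places copies of $G_1,\dots,G_m$ consecutively from left to right with no edges between copies; every ordered graph is uniquely $G_1+\dots+G_m$ with all $G_i$ irreducible, and $(G_1,\dots,G_m)$ is its irreducible block decomposition. $S_n(G)$ is the number of distinct (non-isomorphic as ordered graphs) induced ordered subgraphs of $G$ of order $n$. For $n\in\mathbb{N}$: $J^{(n)}_1=K_n$; $J^{(n)}_2$ on $[n]$ with edge set $\{1n\}$ if $n\geqslant 2$ (empty if $n=1$); $J^{(n)}_3$ on $[n]$ with edges $\{1i: 2\leqslant i\leqslant n\}$; $J^{(n)}_4$ on $[n]$ with edges $\{in: 1\leqslant i\leqslant n-1\}$; $L^{(n)}$ on $[n]$ with edges $\{i(i+1)\}$; $Q_1$ on $[4]$ with edges $\{13,24\}$; $Q_2$ on $[4]$ with edges $\{14,23\}$. $\mathcal{J}$ is the set of all $J^{(n)}_i$, $L^{(n)}$ ($n\in\mathbb{N}$, $i\in[4]$), $Q_1$, $Q_2$. *)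

theory Defs
  imports Main
begin

text \<open>An ordered graph of order n: vertex set {1..n} with natural order; edges are
  pairs (i,j) with 1 \<le> i < j \<le> n.\<close>
type_synonym ograph = "nat \<times> (nat \<times> nat) set"

definition ord_of :: "ograph \<Rightarrow> nat" where "ord_of G = fst G"
definition edges :: "ograph \<Rightarrow> (nat \<times> nat) set" where "edges G = snd G"

definition is_ograph :: "ograph \<Rightarrow> bool" where
  "is_ograph G \<longleftrightarrow> edges G \<subseteq> {(i,j). 1 \<le> i \<and> i < j \<and> j \<le> ord_of G}"

definition separates :: "ograph \<Rightarrow> nat \<Rightarrow> nat \<Rightarrow> bool" where
  "separates G u v \<longleftrightarrow> (\<forall>(i,j) \<in> edges G. j \<le> u \<or> v \<le> i)"

definition irreducible_og :: "ograph \<Rightarrow> bool" where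
  "irreducible_og G \<longleftrightarrow>
     \<not> (\<exists>u v. 1 \<le> u \<and> u < v \<and> v \<le> ord_of G \<and> separates G u v)"

definition osum :: "ograph \<Rightarrow> ograph \<Rightarrow> ograph" where
  "osum G H = (ord_of G + ord_of H,
     edges G \<union> {(i + ord_of G, j + ord_of G) | i j. (i,j) \<in> edges H})"

definition osum_list :: "ograph list \<Rightarrow> ograph" where
  "osum_list Gs = foldr osum Gs (0, {})"

definition block_decomp :: "ograph \<Rightarrow> ograph list \<Rightarrow> bool" where
  "block_decomp G Gs \<longleftrightarrow>
     (\<forall>H \<in> set Gs. is_ograph H \<and> ord_of H \<ge> 1 \<and> irreducible_og H) \<and> G = osum_list Gs"

text \<open>Induced ordered subgraph on a vertex set S, relabelled order-preservingly onto {1..|S|}.\<close>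
definition rank_in :: "nat set \<Rightarrow> nat \<Rightarrow> nat" where
  "rank_in S x = card {y \<in> S. y \<le> x}"

definition induced :: "ograph \<Rightarrow> nat set \<Rightarrow> ograph" where
  "induced G S = (card S,
     {(rank_in S x, rank_in S y) | x y. x \<in> S \<and> y \<in> S \<and> (x,y) \<in> edges G})"

definition S_count :: "nat \<Rightarrow> ograph \<Rightarrow> nat" where
  "S_count n G = card {induced G S | S. S \<subseteq> {1..ord_of G} \<and> card S = n}"

definition J1 :: "nat \<Rightarrow> ograph" where
  "J1 n = (n, {(i,j). 1 \<le> i \<and> i < j \<and> j \<le> n})"
definition J2 :: "nat \<Rightarrow> ograph" where
  "J2 n = (n, if n \<ge> 2 then {(1,n)} else {})"
definition J3 :: "nat \<Rightarrow> ograph" where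
  "J3 n = (n, {(1,i) | i. 2 \<le> i \<and> i \<le> n})"
definition J4 :: "nat \<Rightarrow> ograph" where
  "J4 n = (n, {(i,n) | i. 1 \<le> i \<and> i \<le> n - 1})"
definition Lg :: "nat \<Rightarrow> ograph" where
  "Lg n = (n, {(i,i+1) | i. 1 \<le> i \<and> i + 1 \<le> n})"
definition Q1 :: ograph where "Q1 = (4, {(1,3),(2,4)})"
definition Q2 :: ograph where "Q2 = (4, {(1,4),(2,3)})"

definition Jfam :: "ograph set" where
  "Jfam = (\<Union>n \<in> {1..}. {J1 n, J2 n, J3 n, J4 n, Lg n}) \<union> {Q1, Q2}"

end

theory Submission
  imports Defs
begin

text \<open>
  Every induced subgraph of \<open>A + B\<close> splits as \<open>P + Y\<close> with \<open>P\<close> induced in \<open>A\<close> and \<open>Y\<close> induced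
  in \<open>B\<close>, and if \<open>P\<close> is irreducible and nonempty this splitting is unique. Writing \<open>p\<^sub>t(A)\<close>
  for the number of irreducible induced subgraphs of \<open>A\<close> of order \<open>t\<close>, this gives
  \<open>S\<^sub>n(A + B) \<ge> \<Sum>\<^sub>t p\<^sub>t(A) S\<^sub>n\<^sub>-\<^sub>t(B)\<close>.

  An irreducible \<open>A \<notin> \<J>\<close> has \<open>p\<^sub>1, p\<^sub>2 \<ge> 1\<close> and either \<open>p\<^sub>3 \<ge> 2\<close> or \<open>p\<^sub>3 \<ge> 1, p\<^sub>4 \<ge> 2\<close>:
  otherwise all irreducible triples of \<open>A\<close> carry one edge pattern and all irreducible
  quadruples another, and a case analysis on the triple pattern forces \<open>A\<close> to be complete,
  a path, one of the stars \<open>J\<^sub>3\<close>, \<open>J\<^sub>4\<close>, or (using the quadruples) \<open>J\<^sub>2\<close>, \<open>Q\<^sub>1\<close>, \<open>Q\<^sub>2\<close>.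
  Peeling off the blocks one at a time, each block outside \<open>\<J>\<close> contributes
  \<open>2\<^sup>n\<^sup>-\<^sup>2 + 2\<^sup>n\<^sup>-\<^sup>3 + 2 \<cdot> 2\<^sup>n\<^sup>-\<^sup>4 = 2\<^sup>n\<^sup>-\<^sup>1\<close>.
\<close>

section \<open>Ordered sums and induced subgraphs\<close>

lemma ord_of_osum [simp]: "ord_of (osum A B) = ord_of A + ord_of B"
  by (simp add: osum_def ord_of_def)

lemma edges_osum:
  "edges (osum A B) = edges A \<union> (\<lambda>(i,j). (i + ord_of A, j + ord_of A)) ` edges B"
  by (auto simp: osum_def edges_def ord_of_def)

lemma osum_list_Nil [simp]: "osum_list [] = (0, {})"
  by (simp add: osum_list_def)

lemma osum_list_Cons [simp]: "osum_list (A # Gs) = osum A (osum_list Gs)"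
  by (simp add: osum_list_def)

lemma osum_empty_left [simp]: "osum (0, {}) B = B"
  by (simp add: osum_def ord_of_def edges_def)

lemma ord_of_induced [simp]: "ord_of (induced G S) = card S"
  by (simp add: induced_def ord_of_def)

lemma edges_induced:
  "edges (induced G S) = (\<lambda>(x,y). (rank_in S x, rank_in S y)) ` (edges G \<inter> S \<times> S)"
  by (auto simp: induced_def edges_def image_iff)

lemma induced_empty [simp]: "induced G {} = (0, {})"
  by (simp add: induced_def)

lemma ograph_eqI: "ord_of G = ord_of H \<Longrightarrow> edges G = edges H \<Longrightarrow> G = H"
  by (simp add: ord_of_def edges_def prod_eq_iff)

lemma ograph_eq: "G = (ord_of G, edges G)"
  by (simp add: ord_of_def edges_def)

lemma is_ograph_osum: "is_ograph A \<Longrightarrow> is_ograph B \<Longrightarrow> is_ograph (osum A B)"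
  by (auto simp: is_ograph_def edges_osum)

lemma is_ograph_osum_list: "\<forall>H\<in>set Gs. is_ograph H \<Longrightarrow> is_ograph (osum_list Gs)"
proof (induction Gs)
  case Nil
  then show ?case by (simp add: is_ograph_def edges_def)
next
  case (Cons A Gs)
  then show ?case by (simp add: is_ograph_osum)
qed

lemma irreducible_og_iff:
  "irreducible_og G \<longleftrightarrow> (\<forall>u. 1 \<le> u \<and> u < ord_of G \<longrightarrow> (\<exists>(i,j)\<in>edges G. i \<le> u \<and> u < j))"
proof
  assume "irreducible_og G"
  then have "\<not> separates G u (Suc u)" if "1 \<le> u" "u < ord_of G" for u
    using that unfolding irreducible_og_def by auto
  then show "\<forall>u. 1 \<le> u \<and> u < ord_of G \<longrightarrow> (\<exists>(i,j)\<in>edges G. i \<le> u \<and> u < j)"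
    unfolding separates_def by fastforce
next
  assume "\<forall>u. 1 \<le> u \<and> u < ord_of G \<longrightarrow> (\<exists>(i,j)\<in>edges G. i \<le> u \<and> u < j)"
  then show "irreducible_og G"
    unfolding irreducible_og_def separates_def by fastforce
qed

lemma rank_in_pos: "finite S \<Longrightarrow> x \<in> S \<Longrightarrow> 1 \<le> rank_in S x"
  unfolding rank_in_def by (simp add: Suc_le_eq card_gt_0_iff) blast

lemma rank_in_le_card: "finite S \<Longrightarrow> rank_in S x \<le> card S"
  unfolding rank_in_def by (intro card_mono) auto

lemma rank_in_strict_mono:
  assumes "finite S" "y \<in> S" "x < y"
  shows "rank_in S x < rank_in S y"
proof -
  have "y \<in> {z \<in> S. z \<le> y} - {z \<in> S. z \<le> x}"
    using assms by auto
  moreover have "{z \<in> S. z \<le> x} \<subseteq> {z \<in> S. z \<le> y}"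
    using assms by auto
  ultimately have "{z \<in> S. z \<le> x} \<subset> {z \<in> S. z \<le> y}"
    by blast
  then show ?thesis
    unfolding rank_in_def using assms(1) by (simp add: psubset_card_mono)
qed

lemma rank_in_sorted:
  assumes "sorted_wrt (<) xs" "i < length xs"
  shows "rank_in (set xs) (xs ! i) = Suc i"
proof -
  have le_iff: "xs ! j \<le> xs ! i \<longleftrightarrow> j \<le> i" if "j < length xs" for j
    using assms that by (metis linorder_not_le order.strict_iff_not sorted_wrt_iff_nth_less
        nat_less_le)
  have "{y \<in> set xs. y \<le> xs ! i} = set (take (Suc i) xs)"
    using assms(2) by (auto simp: in_set_conv_nth le_iff)
      (metis less_Suc_eq_le nth_take, metis less_Suc_eq_le le_less_trans)
  moreover have "distinct (take (Suc i) xs)"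
    using assms(1) by (simp add: strict_sorted_iff)
  ultimately show ?thesis
    unfolding rank_in_def using assms(2) by (simp add: distinct_card)
qed

lemma is_ograph_induced:
  assumes "is_ograph G" "finite S"
  shows "is_ograph (induced G S)"
  unfolding is_ograph_def
proof clarify
  fix i j
  assume "(i,j) \<in> edges (induced G S)"
  then obtain x y where "(x,y) \<in> edges G" "x \<in> S" "y \<in> S" "i = rank_in S x" "j = rank_in S y"
    by (auto simp: edges_induced)
  moreover have "x < y"
    using assms(1) \<open>(x,y) \<in> edges G\<close> by (auto simp: is_ograph_def)
  ultimately show "1 \<le> i \<and> i < j \<and> j \<le> ord_of (induced G S)"
    using rank_in_pos rank_in_strict_mono rank_in_le_card assms(2) by simp
qed

lemma card_Un_shift:
  fixes a :: nat
  assumes "S \<subseteq> {1..a}" "finite R" "0 \<notin> R"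
  shows "card (S \<union> (\<lambda>x. x + a) ` R) = card S + card R"
proof -
  have "y \<le> a" if "y \<in> S" for y
    using that assms(1) by auto
  moreover have "0 < r" if "r \<in> R" for r
    using that assms(3) neq0_conv by metis
  ultimately have "S \<inter> (\<lambda>x. x + a) ` R = {}"
    by fastforce
  then show ?thesis
    using assms finite_subset[OF assms(1)] by (simp add: card_Un_disjoint card_image)
qed

lemma rank_in_Un_shift:
  assumes S: "S \<subseteq> {1..a}" and R: "finite R" "0 \<notin> R"
  shows "x \<in> S \<Longrightarrow> rank_in (S \<union> (\<lambda>x. x + a) ` R) x = rank_in S x"
    and "r \<in> R \<Longrightarrow> rank_in (S \<union> (\<lambda>x. x + a) ` R) (r + a) = rank_in R r + card S"
proof -
  define U where "U = S \<union> (\<lambda>x. x + a) ` R"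
  have S_le: "y \<le> a" if "y \<in> S" for y
    using that S by auto
  have R_pos: "0 < r" if "r \<in> R" for r
    using that R(2) neq0_conv by metis
  show "rank_in U x = rank_in S x" if "x \<in> S"
  proof -
    have "{y \<in> U. y \<le> x} = {y \<in> S. y \<le> x}"
      using S_le[OF that] R_pos unfolding U_def by fastforce
    then show ?thesis
      by (simp add: rank_in_def)
  qed
  show "rank_in U (r + a) = rank_in R r + card S" if "r \<in> R"
  proof -
    have "{y \<in> U. y \<le> r + a} = S \<union> (\<lambda>x. x + a) ` {y \<in> R. y \<le> r}"
      using that S unfolding U_def by force
    moreover have "card (S \<union> (\<lambda>x. x + a) ` {y \<in> R. y \<le> r}) = card S + card {y \<in> R. y \<le> r}"
      using card_Un_shift[OF S] R by simp
    ultimately show ?thesis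
      by (simp add: rank_in_def)
  qed
qed

lemma induced_osum:
  assumes A: "is_ograph A" and B: "is_ograph B"
    and S: "S \<subseteq> {1..ord_of A}" and R: "R \<subseteq> {1..ord_of B}"
  shows "induced (osum A B) (S \<union> (\<lambda>x. x + ord_of A) ` R) = osum (induced A S) (induced B R)"
proof -
  define a where "a = ord_of A"
  define U where "U = S \<union> (\<lambda>x. x + a) ` R"
  have R': "finite R" "0 \<notin> R"
    using R finite_subset by auto
  note rank = rank_in_Un_shift[OF S[folded a_def] R', folded U_def]
  have restr: "edges (osum A B) \<inter> U \<times> U =
      (edges A \<inter> S \<times> S) \<union> (\<lambda>(i,j). (i + a, j + a)) ` (edges B \<inter> R \<times> R)"
    using A B S R unfolding U_def a_def edges_osum is_ograph_def by fastforce
  have "edges (induced (osum A B) U) = (\<lambda>(x,y). (rank_in U x, rank_in U y)) `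
      (edges A \<inter> S \<times> S \<union> (\<lambda>(i,j). (i + a, j + a)) ` (edges B \<inter> R \<times> R))"
    by (simp only: edges_induced restr)
  also have "\<dots> = (\<lambda>(x,y). (rank_in S x, rank_in S y)) ` (edges A \<inter> S \<times> S) \<union>
      (\<lambda>(x,y). (rank_in R x + card S, rank_in R y + card S)) ` (edges B \<inter> R \<times> R)"
    unfolding image_Un image_image
    by (intro arg_cong2[where f = "(\<union>)"] image_cong) (auto simp: rank)
  also have "\<dots> = edges (osum (induced A S) (induced B R))"
    by (simp add: edges_osum edges_induced image_image case_prod_beta)
  finally show ?thesis
    using card_Un_shift[OF S R'] unfolding U_def a_def by (simp add: ograph_eqI)
qed

lemma edges_osum_first:
  "is_ograph A \<Longrightarrow> is_ograph B \<Longrightarrow> edges A = {(i,j) \<in> edges (osum A B). j \<le> ord_of A}"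
  unfolding edges_osum is_ograph_def by auto

lemma edges_osum_second:
  "is_ograph A \<Longrightarrow> is_ograph B \<Longrightarrow>
    edges B = {(i,j). (i + ord_of A, j + ord_of A) \<in> edges (osum A B) \<and> 1 \<le> i}"
  unfolding edges_osum is_ograph_def by auto

lemma ord_of_irreducible_first_block_le:
  assumes "is_ograph P" "is_ograph Y" "1 \<le> ord_of P" "irreducible_og P'"
    and eq: "osum P Y = osum P' Y'"
  shows "ord_of P' \<le> ord_of P"
proof (rule ccontr)
  assume "\<not> ord_of P' \<le> ord_of P"
  then obtain i j where "(i,j) \<in> edges P'" "i \<le> ord_of P" "ord_of P < j"
    using assms(3,4) unfolding irreducible_og_iff by fastforce
  then have "(i,j) \<in> edges (osum P Y)"
    using eq by (simp add: edges_osum)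
  then show False
    using assms(1,2) \<open>i \<le> ord_of P\<close> \<open>ord_of P < j\<close>
    unfolding edges_osum is_ograph_def by auto
qed

lemma osum_irreducible_cancel:
  assumes P: "is_ograph P" "irreducible_og P" "1 \<le> ord_of P"
    and P': "is_ograph P'" "irreducible_og P'" "1 \<le> ord_of P'"
    and Y: "is_ograph Y" "is_ograph Y'"
    and eq: "osum P Y = osum P' Y'"
  shows "P = P'" "Y = Y'"
proof -
  have "ord_of P = ord_of P'"
    using ord_of_irreducible_first_block_le[OF P(1) Y(1) P(3) P'(2) eq]
      ord_of_irreducible_first_block_le[OF P'(1) Y(2) P'(3) P(2) eq[symmetric]] by simp
  moreover have "ord_of Y = ord_of Y'"
    using eq calculation by (metis add_left_imp_eq ord_of_osum)
  ultimately show "P = P'" "Y = Y'"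
    using edges_osum_first[OF P(1) Y(1)] edges_osum_first[OF P'(1) Y(2)]
      edges_osum_second[OF P(1) Y(1)] edges_osum_second[OF P'(1) Y(2)] eq
    by (simp_all add: ograph_eqI)
qed

section \<open>Induced subgraphs on two, three and four vertices\<close>

lemma edges_induced_sorted:
  assumes "sorted_wrt (<) xs"
  shows "edges (induced A (set xs)) =
    {(Suc i, Suc j) | i j. i < length xs \<and> j < length xs \<and> (xs ! i, xs ! j) \<in> edges A}"
proof -
  have restr: "edges A \<inter> set xs \<times> set xs = (\<lambda>(i,j). (xs ! i, xs ! j)) `
          {(i,j). i < length xs \<and> j < length xs \<and> (xs ! i, xs ! j) \<in> edges A}"
    by (fastforce simp: in_set_conv_nth)
  show ?thesis
    unfolding edges_induced restr image_image
    by (auto simp: rank_in_sorted[OF assms] image_iff) (metis rank_in_sorted[OF assms])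
qed

lemma irreducible_induced_sorted_iff:
  assumes "sorted_wrt (<) xs"
  shows "irreducible_og (induced A (set xs)) \<longleftrightarrow>
    (\<forall>u<length xs. 0 < u \<longrightarrow> (\<exists>i<u. \<exists>j<length xs. u \<le> j \<and> (xs ! i, xs ! j) \<in> edges A))"
proof -
  have "card (set xs) = length xs"
    using assms by (simp add: distinct_card strict_sorted_iff)
  moreover have "(\<exists>(p,q)\<in>edges (induced A (set xs)). p \<le> u \<and> u < q) \<longleftrightarrow>
      (\<exists>i<u. \<exists>j<length xs. u \<le> j \<and> (xs ! i, xs ! j) \<in> edges A)" for u
  proof
    assume "\<exists>(p,q)\<in>edges (induced A (set xs)). p \<le> u \<and> u < q"
    then show "\<exists>i<u. \<exists>j<length xs. u \<le> j \<and> (xs ! i, xs ! j) \<in> edges A"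
      unfolding edges_induced_sorted[OF assms] by (auto simp: Suc_le_eq less_Suc_eq_le) blast
  next
    assume "\<exists>i<u. \<exists>j<length xs. u \<le> j \<and> (xs ! i, xs ! j) \<in> edges A"
    then obtain i j where "i < u" "u \<le> j" "j < length xs" "(xs ! i, xs ! j) \<in> edges A"
      by blast
    then show "\<exists>(p,q)\<in>edges (induced A (set xs)). p \<le> u \<and> u < q"
      unfolding edges_induced_sorted[OF assms] by (intro bexI[of _ "(Suc i, Suc j)"]) auto
  qed
  ultimately show ?thesis
    unfolding irreducible_og_iff by (auto simp: Suc_le_eq)
qed

definition triple_irred :: "(nat \<times> nat) set \<Rightarrow> nat \<Rightarrow> nat \<Rightarrow> nat \<Rightarrow> bool" where
  "triple_irred E a b c \<longleftrightarrow> ((a,b) \<in> E \<or> (a,c) \<in> E) \<and> ((a,c) \<in> E \<or> (b,c) \<in> E)"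

definition triple_pattern :: "(nat \<times> nat) set \<Rightarrow> nat \<Rightarrow> nat \<Rightarrow> nat \<Rightarrow> bool \<times> bool \<times> bool" where
  "triple_pattern E a b c = ((a,b) \<in> E, (a,c) \<in> E, (b,c) \<in> E)"

definition quad_irred :: "(nat \<times> nat) set \<Rightarrow> nat \<Rightarrow> nat \<Rightarrow> nat \<Rightarrow> nat \<Rightarrow> bool" where
  "quad_irred E a b c d \<longleftrightarrow> ((a,b) \<in> E \<or> (a,c) \<in> E \<or> (a,d) \<in> E) \<and>
     ((a,c) \<in> E \<or> (a,d) \<in> E \<or> (b,c) \<in> E \<or> (b,d) \<in> E) \<and> ((a,d) \<in> E \<or> (b,d) \<in> E \<or> (c,d) \<in> E)"

definition quad_pattern ::
    "(nat \<times> nat) set \<Rightarrow> nat \<Rightarrow> nat \<Rightarrow> nat \<Rightarrow> nat \<Rightarrow> bool \<times> bool \<times> bool \<times> bool \<times> bool \<times> bool" where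
  "quad_pattern E a b c d = ((a,b) \<in> E, (a,c) \<in> E, (a,d) \<in> E, (b,c) \<in> E, (b,d) \<in> E, (c,d) \<in> E)"

lemma irreducible_induced_triple_iff:
  assumes "a < b" "b < c"
  shows "irreducible_og (induced A {a,b,c}) \<longleftrightarrow> triple_irred (edges A) a b c"
proof -
  have S: "{a,b,c} = set [a,b,c]" and sorted: "sorted_wrt (<) [a,b,c]"
    using assms by auto
  show ?thesis
    unfolding S irreducible_induced_sorted_iff[OF sorted] triple_irred_def
    by (simp add: All_less_Suc Ex_less_Suc) blast
qed

lemma triple_pattern_eq_induced:
  assumes "a < b" "b < c"
  shows "triple_pattern (edges A) a b c =
    ((1,2) \<in> edges (induced A {a,b,c}), (1,3) \<in> edges (induced A {a,b,c}), (2,3) \<in> edges (induced A {a,b,c}))"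
proof -
  have S: "{a,b,c} = set [a,b,c]" and sorted: "sorted_wrt (<) [a,b,c]"
    using assms by auto
  show ?thesis
    unfolding triple_pattern_def S edges_induced_sorted[OF sorted]
    by (simp add: numeral_eq_Suc less_Suc_eq)
qed

lemma irreducible_induced_quad_iff:
  assumes "a < b" "b < c" "c < d"
  shows "irreducible_og (induced A {a,b,c,d}) \<longleftrightarrow> quad_irred (edges A) a b c d"
proof -
  have S: "{a,b,c,d} = set [a,b,c,d]" and sorted: "sorted_wrt (<) [a,b,c,d]"
    using assms by auto
  show ?thesis
    unfolding S irreducible_induced_sorted_iff[OF sorted] quad_irred_def
    by (simp add: All_less_Suc Ex_less_Suc) blast
qed

lemma quad_pattern_eq_induced:
  assumes "a < b" "b < c" "c < d"
  shows "quad_pattern (edges A) a b c d =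
    ((1,2) \<in> edges (induced A {a,b,c,d}), (1,3) \<in> edges (induced A {a,b,c,d}),
     (1,4) \<in> edges (induced A {a,b,c,d}), (2,3) \<in> edges (induced A {a,b,c,d}),
     (2,4) \<in> edges (induced A {a,b,c,d}), (3,4) \<in> edges (induced A {a,b,c,d}))"
proof -
  have S: "{a,b,c,d} = set [a,b,c,d]" and sorted: "sorted_wrt (<) [a,b,c,d]"
    using assms by auto
  show ?thesis
    unfolding quad_pattern_def S edges_induced_sorted[OF sorted]
    by (simp add: numeral_eq_Suc less_Suc_eq)
qed

lemma irreducible_induced_edge:
  assumes "(a,b) \<in> edges A" "a < b"
  shows "irreducible_og (induced A {a,b})"
proof -
  have S: "{a,b} = set [a,b]" and sorted: "sorted_wrt (<) [a,b]"
    using assms by auto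
  show ?thesis
    unfolding S irreducible_induced_sorted_iff[OF sorted] using assms(1)
    by (simp add: All_less_Suc Ex_less_Suc)
qed

lemma irreducible_induced_singleton: "irreducible_og (induced A {a})"
  by (simp add: irreducible_og_iff)

section \<open>Irreducible graphs with uniform irreducible triples and quadruples\<close>

definition triples_have_pattern :: "(nat \<times> nat) set \<Rightarrow> bool \<times> bool \<times> bool \<Rightarrow> bool" where
  "triples_have_pattern E T \<longleftrightarrow>
     (\<forall>a b c. a < b \<longrightarrow> b < c \<longrightarrow> triple_irred E a b c \<longrightarrow> triple_pattern E a b c = T)"

definition triples_uniform :: "(nat \<times> nat) set \<Rightarrow> bool" where
  "triples_uniform E \<longleftrightarrow> (\<forall>a b c a' b' c'. a < b \<longrightarrow> b < c \<longrightarrow> a' < b' \<longrightarrow> b' < c' \<longrightarrow>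
     triple_irred E a b c \<longrightarrow> triple_irred E a' b' c' \<longrightarrow>
     triple_pattern E a b c = triple_pattern E a' b' c')"

definition quads_uniform :: "(nat \<times> nat) set \<Rightarrow> bool" where
  "quads_uniform E \<longleftrightarrow> (\<forall>a b c d a' b' c' d'. a < b \<longrightarrow> b < c \<longrightarrow> c < d \<longrightarrow>
     a' < b' \<longrightarrow> b' < c' \<longrightarrow> c' < d' \<longrightarrow> quad_irred E a b c d \<longrightarrow> quad_irred E a' b' c' d' \<longrightarrow>
     quad_pattern E a b c d = quad_pattern E a' b' c' d')"

lemma quads_uniformD:
  assumes "quads_uniform E" "a < b" "b < c" "c < d" "a' < b'" "b' < c'" "c' < d'"
    and "quad_irred E a b c d" "quad_irred E a' b' c' d'"
  shows "quad_pattern E a b c d = quad_pattern E a' b' c' d'"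
  using assms unfolding quads_uniform_def by blast

lemma triple_irred_outer: "(a,c) \<in> E \<Longrightarrow> triple_irred E a b c"
  by (simp add: triple_irred_def)

lemma quad_irred_outer: "(a,d) \<in> E \<Longrightarrow> quad_irred E a b c d"
  by (simp add: quad_irred_def)

locale irred_edges =
  fixes E :: "(nat \<times> nat) set" and h :: nat
  assumes edge_bounds: "(i,j) \<in> E \<Longrightarrow> 1 \<le> i \<and> i < j \<and> j \<le> h"
    and cut_crossed: "1 \<le> u \<Longrightarrow> u < h \<Longrightarrow> \<exists>i j. (i,j) \<in> E \<and> i \<le> u \<and> u < j"
begin

lemma cut_edge:
  assumes "1 \<le> u" "u < h"
  obtains i j where "(i,j) \<in> E" "i \<le> u" "u < j"
  using cut_crossed[OF assms] by blast

lemma first_edge: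
  assumes "1 < h"
  obtains c where "(1,c) \<in> E"
proof -
  obtain i c where ic: "(i,c) \<in> E" "i \<le> 1" "1 < c"
    using cut_edge[OF order_refl assms] .
  then have "i = 1"
    using edge_bounds[OF ic(1)] by simp
  then show ?thesis
    using that ic(1) by simp
qed

lemma irreducible_triple_exists:
  assumes "3 \<le> h"
  obtains a b c where "a < b" "b < c" "triple_irred E a b c"
proof -
  obtain j where j: "(1,j) \<in> E"
    using first_edge assms by auto
  show ?thesis
  proof (cases "j = 2")
    case True
    have "1 \<le> (2::nat)" "2 < h"
      using assms by auto
    then obtain i' j' where ij': "(i',j') \<in> E" "i' \<le> 2" "2 < j'"
      by (rule cut_edge)
    then have "i' = 1 \<or> i' = 2"
      using edge_bounds[OF ij'(1)] by auto
    then have "triple_irred E 1 2 j'"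
      using j ij'(1) True by (auto simp: triple_irred_def)
    then show ?thesis
      using that[of 1 2 j'] ij'(3) by simp
  next
    case False
    then have "2 < j"
      using edge_bounds[OF j] by simp
    then show ?thesis
      using that[of 1 2 j] triple_irred_outer[OF j] by simp
  qed
qed

context
  assumes triples_complete: "triples_have_pattern E (True, True, True)"
begin

lemma complete_triple:
  assumes "a < b" "b < c" "triple_irred E a b c"
  shows "(a,b) \<in> E" "(a,c) \<in> E" "(b,c) \<in> E"
  using triples_complete assms by (auto simp: triples_have_pattern_def triple_pattern_def)

lemma edge_if_triples_complete:
  assumes "1 \<le> x" "x < y" "y \<le> h"
  shows "(x,y) \<in> E"
  using assms
proof (induction y arbitrary: x rule: less_induct)
  case (less y)
  have "1 \<le> y - 1" "y - 1 < h"
    using less.prems by auto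
  then obtain i j where ij: "(i,j) \<in> E" "i \<le> y - 1" "y - 1 < j"
    by (rule cut_edge)
  have "i < y"
    using ij less.prems by auto
  have iy: "(i,y) \<in> E"
  proof (cases "j = y")
    case False
    then have "y < j"
      using ij by auto
    then show ?thesis
      using complete_triple(1)[OF \<open>i < y\<close> \<open>y < j\<close> triple_irred_outer[OF ij(1)]] by simp
  qed (use ij in simp)
  consider "x < i" | "x = i" | "i < x"
    by linarith
  then show ?case
  proof cases
    case 1
    then have "(x,i) \<in> E"
      using less.IH[of i x] \<open>i < y\<close> less.prems by simp
    then have "triple_irred E x i y"
      using iy by (simp add: triple_irred_def)
    then show ?thesis
      using complete_triple(2)[OF 1 \<open>i < y\<close>] by simp
  next
    case 3
    then show ?thesis
      using complete_triple(3)[OF 3 _ triple_irred_outer[OF iy]] less.prems by simp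
  qed (use iy in simp)
qed

lemma complete_if_triples_complete: "E = {(i,j). 1 \<le> i \<and> i < j \<and> j \<le> h}"
  using edge_if_triples_complete edge_bounds by auto

end

lemma path_if_triples_without_outer_edge:
  assumes "triples_have_pattern E (True, False, True)"
  shows "E = {(i,i+1) | i. 1 \<le> i \<and> i + 1 \<le> h}"
proof -
  have no_outer: "(a,c) \<notin> E" if "a < b" "b < c" "triple_irred E a b c" for a b c
    using assms that by (auto simp: triples_have_pattern_def triple_pattern_def)
  have short: "y = x + 1" if "(x,y) \<in> E" for x y
  proof (rule ccontr)
    assume "y \<noteq> x + 1"
    then have "x + 1 < y"
      using edge_bounds[OF that] by auto
    then show False
      using no_outer[OF _ \<open>x + 1 < y\<close> triple_irred_outer[OF that]] that by simp
  qed
  have "(u, u + 1) \<in> E" if "1 \<le> u" "u + 1 \<le> h" for u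
  proof -
    have "1 \<le> u" "u < h"
      using that by auto
    then obtain i j where ij: "(i,j) \<in> E" "i \<le> u" "u < j"
      by (rule cut_edge)
    then have "i = u" "j = u + 1"
      using short[OF ij(1)] by auto
    then show ?thesis
      using ij(1) by simp
  qed
  then show ?thesis
    using short edge_bounds by fastforce
qed

context
  assumes triples_left: "triples_have_pattern E (True, True, False)"
begin

lemma left_triple:
  assumes "a < b" "b < c" "triple_irred E a b c"
  shows "(a,b) \<in> E" "(b,c) \<notin> E"
  using triples_left assms by (auto simp: triples_have_pattern_def triple_pattern_def)

lemma edge_from_1_if_triples_left:
  assumes "2 \<le> y" "y \<le> h"
  shows "(1,y) \<in> E"
  using assms
proof (induction y rule: less_induct)
  case (less y)
  have "1 \<le> y - 1" "y - 1 < h"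
    using less.prems by auto
  then obtain i j where ij: "(i,j) \<in> E" "i \<le> y - 1" "y - 1 < j"
    by (rule cut_edge)
  have "1 \<le> i" "i < j"
    using edge_bounds[OF ij(1)] by auto
  show ?case
  proof (cases "i = 1")
    case True
    show ?thesis
    proof (cases "j = y")
      case False
      then have "1 < y" "y < j"
        using ij less.prems by auto
      then show ?thesis
        using left_triple(1)[OF _ _ triple_irred_outer] ij(1) True by simp
    qed (use ij True in simp)
  next
    case False
    then have "1 < i" "i < y"
      using \<open>1 \<le> i\<close> ij less.prems by auto
    then have "(1,i) \<in> E"
      using less.IH less.prems by simp
    then have "triple_irred E 1 i j"
      using ij(1) by (simp add: triple_irred_def)
    then show ?thesis
      using left_triple(2)[OF \<open>1 < i\<close> \<open>i < j\<close>] ij(1) by simp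
  qed
qed

lemma star_left_if_triples_left: "E = {(1,i) | i. 2 \<le> i \<and> i \<le> h}"
proof -
  have "x = 1" if "(x,y) \<in> E" for x y
  proof (rule ccontr)
    assume "x \<noteq> 1"
    then have "1 < x" "x < y" "2 \<le> y" "y \<le> h"
      using edge_bounds[OF that] by auto
    then show False
      using left_triple(2)[OF _ _ triple_irred_outer[OF edge_from_1_if_triples_left]] that by simp
  qed
  then show ?thesis
    using edge_from_1_if_triples_left edge_bounds by fastforce
qed

end

context
  assumes triples_right: "triples_have_pattern E (False, True, True)"
begin

lemma right_triple:
  assumes "a < b" "b < c" "triple_irred E a b c"
  shows "(a,b) \<notin> E" "(b,c) \<in> E"
  using triples_right assms by (auto simp: triples_have_pattern_def triple_pattern_def)

lemma edge_to_h_if_triples_right: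
  assumes "1 \<le> x" "x < h"
  shows "(x,h) \<in> E"
  using assms
proof (induction "h - x" arbitrary: x rule: less_induct)
  case less
  obtain i j where ij: "(i,j) \<in> E" "i \<le> x" "x < j"
    using cut_edge[OF less.prems] .
  have "i < j" "j \<le> h"
    using edge_bounds[OF ij(1)] by auto
  show ?case
  proof (cases "j = h")
    case True
    show ?thesis
    proof (cases "i = x")
      case False
      then have "i < x"
        using ij by auto
      then show ?thesis
        using right_triple(2)[OF _ \<open>x < h\<close> triple_irred_outer] ij(1) True by simp
    qed (use ij True in simp)
  next
    case False
    then have "j < h"
      using \<open>j \<le> h\<close> by simp
    then have "(j,h) \<in> E"
      using less.hyps[of j] ij less.prems by simp
    then have "triple_irred E i j h"
      using ij(1) by (simp add: triple_irred_def)
    then show ?thesis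
      using right_triple(1)[OF \<open>i < j\<close> \<open>j < h\<close>] ij(1) by simp
  qed
qed

lemma star_right_if_triples_right: "E = {(i,h) | i. 1 \<le> i \<and> i \<le> h - 1}"
proof -
  have "y = h" if "(x,y) \<in> E" for x y
  proof (rule ccontr)
    assume "y \<noteq> h"
    then have "1 \<le> x" "x < y" "y < h"
      using edge_bounds[OF that] by auto
    then show False
      using right_triple(1)[OF _ _ triple_irred_outer[OF edge_to_h_if_triples_right]] that by simp
  qed
  then show ?thesis
    using edge_to_h_if_triples_right edge_bounds by fastforce
qed

end

context
  assumes outer_only: "triples_have_pattern E (False, True, False)"
begin

lemma no_inner_edge:
  assumes "a < b" "b < c" "triple_irred E a b c"
  shows "(a,b) \<notin> E" "(b,c) \<notin> E"
  using outer_only assms by (auto simp: triples_have_pattern_def triple_pattern_def)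

lemma edge_left_unique: "(x,y) \<in> E \<Longrightarrow> (x,y') \<in> E \<Longrightarrow> y = y'"
  using no_inner_edge(1)[OF _ _ triple_irred_outer] edge_bounds by (metis linorder_neqE_nat)

lemma edge_right_unique: "(x,y) \<in> E \<Longrightarrow> (x',y) \<in> E \<Longrightarrow> x = x'"
  using no_inner_edge(2)[OF _ _ triple_irred_outer] edge_bounds by (metis linorder_neqE_nat)

lemma no_edge_chain: "(x,y) \<in> E \<Longrightarrow> (y,z) \<notin> E"
  using no_inner_edge(1)[of x y z] edge_bounds by (auto simp: triple_irred_def)

lemma inner_edges_if_spanning_edge:
  assumes uniform: "quads_uniform E" and span: "(1,h) \<in> E"
    and bb': "(b,b') \<in> E" "1 < b" "b' < h" and xy: "1 < x" "x < y" "y < h"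
  shows "(x,y) \<in> E"
proof -
  have "(1,v) \<in> E \<longleftrightarrow> v = h" "(u,h) \<in> E \<longleftrightarrow> u = 1" for u v
    using edge_left_unique[OF span] edge_right_unique[OF span] span by blast+
  then have pattern: "quad_pattern E 1 u v h = (False, False, True, (u,v) \<in> E, False, False)"
    if "1 < u" "u < v" "v < h" for u v
    using that by (auto simp: quad_pattern_def)
  have "b < b'"
    using edge_bounds[OF bb'(1)] by simp
  then have "quad_pattern E 1 b b' h = quad_pattern E 1 x y h"
    using quads_uniformD[OF uniform _ _ _ _ _ _ quad_irred_outer[OF span] quad_irred_outer[OF span]]
      bb'(2,3) xy by blast
  then show ?thesis
    using pattern[OF bb'(2) \<open>b < b'\<close> bb'(3)] pattern[OF xy] bb'(1) by simp
qed

lemma single_edge_or_Q2_if_spanning_edge: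
  assumes uniform: "quads_uniform E" and span: "(1,h) \<in> E"
  shows "E = {(1,h)} \<or> (h = 4 \<and> E = {(1,4),(2,3)})"
proof (cases "E \<subseteq> {(1,h)}")
  case True
  then show ?thesis
    using span by blast
next
  case False
  have from_1: "(1,y) \<in> E \<longleftrightarrow> y = h" for y
    using edge_left_unique[OF span] span by blast
  have to_h: "(x,h) \<in> E \<longleftrightarrow> x = 1" for x
    using edge_right_unique[OF span] span by blast
  obtain b b' where bb': "(b,b') \<in> E" "(b,b') \<noteq> (1,h)"
    using False by auto
  then have "1 < b" "b < b'" "b' < h"
    using edge_bounds[OF bb'(1)] from_1[of b'] to_h[of b] by auto
  note inner = inner_edges_if_spanning_edge[OF uniform span bb'(1) \<open>1 < b\<close> \<open>b' < h\<close>]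
  have "h = 4"
  proof (rule ccontr)
    assume "h \<noteq> 4"
    then have "(2,3) \<in> E" "(2,4) \<in> E"
      using inner \<open>1 < b\<close> \<open>b < b'\<close> \<open>b' < h\<close> by auto
    then show False
      using edge_left_unique by fastforce
  qed
  moreover have "E \<subseteq> {(1,4),(2,3)}"
  proof
    fix p
    assume "p \<in> E"
    then obtain x y where xy: "p = (x,y)" "(x,y) \<in> E"
      by (cases p) auto
    moreover have "1 \<le> x" "x < y" "y \<le> 4"
      using edge_bounds[OF xy(2)] \<open>h = 4\<close> by auto
    ultimately show "p \<in> {(1,4),(2,3)}"
      using from_1 to_h \<open>h = 4\<close> by (cases "x = 1 \<or> y = 4") auto
  qed
  ultimately show ?thesis
    using span inner \<open>h = 4\<close> by auto
qed

lemma Q1_edges_if_short_first_edge: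
  assumes uniform: "quads_uniform E" and first: "(1,c) \<in> E" and "c < h"
  shows "(1,3) \<in> E" "(2,4) \<in> E"
proof -
  have "1 \<le> c"
    using edge_bounds[OF first] by simp
  then obtain i j where ij: "(i,j) \<in> E" "i \<le> c" "c < j"
    using cut_edge \<open>c < h\<close> by blast
  have "i \<noteq> 1" "i \<noteq> c" "(1,j) \<notin> E"
    using edge_left_unique[OF first] no_edge_chain[OF first] ij by fastforce+
  then have "1 < i" "i < c"
    using edge_bounds[OF ij(1)] ij(2) by auto
  have quad: "quad_irred E 1 i c j"
    using first ij(1) by (simp add: quad_irred_def)
  have "c = 3"
  proof (rule ccontr)
    assume "c \<noteq> 3"
    then have "quad_pattern E 1 i c j = quad_pattern E 1 2 3 c"
      using quads_uniformD[OF uniform _ _ _ _ _ _ quad quad_irred_outer[OF first]]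
        \<open>1 < i\<close> \<open>i < c\<close> ij(3) by simp
    then show False
      using first \<open>(1,j) \<notin> E\<close> by (simp add: quad_pattern_def)
  qed
  then have "i = 2"
    using \<open>1 < i\<close> \<open>i < c\<close> by simp
  have "j = 4"
  proof (rule ccontr)
    assume "j \<noteq> 4"
    have "(2,j) \<in> E"
      using ij(1) \<open>i = 2\<close> by simp
    then have "quad_pattern E 1 2 3 j = quad_pattern E 2 3 4 j"
      using quads_uniformD[OF uniform _ _ _ _ _ _ quad quad_irred_outer]
        \<open>i = 2\<close> \<open>c = 3\<close> ij(3) \<open>j \<noteq> 4\<close> by simp
    then show False
      using \<open>(2,j) \<in> E\<close> \<open>(1,j) \<notin> E\<close> by (simp add: quad_pattern_def)
  qed
  then show "(1,3) \<in> E" "(2,4) \<in> E"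
    using first ij(1) \<open>c = 3\<close> \<open>i = 2\<close> by simp_all
qed

lemma Q1_if_Q1_edges:
  assumes e13: "(1,3) \<in> E" and e24: "(2,4) \<in> E"
  shows "h = 4 \<and> E = {(1,3),(2,4)}"
proof -
  have edge_cases: "x = 1 \<and> y = 3 \<or> x = 2 \<and> y = 4 \<or> 4 < x"
    if xy: "(x,y) \<in> E" for x y
  proof -
    consider "x = 1" | "x = 2" | "x = 3" | "x = 4" | "4 < x"
      using edge_bounds[OF xy] by linarith
    then show ?thesis
      using edge_left_unique[OF e13] edge_left_unique[OF e24] no_edge_chain[OF e13]
        no_edge_chain[OF e24] xy by cases auto
  qed
  have "h = 4"
  proof (rule ccontr)
    assume "h \<noteq> 4"
    then have "4 < h"
      using edge_bounds[OF e24] by simp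
    then obtain x y where "(x,y) \<in> E" "x \<le> 4" "4 < y"
      using cut_edge[of 4] by auto
    then show False
      using edge_cases by force
  qed
  moreover have "E \<subseteq> {(1,3),(2,4)}"
  proof
    fix p
    assume "p \<in> E"
    then obtain x y where "p = (x,y)" "(x,y) \<in> E"
      by (cases p) auto
    then show "p \<in> {(1,3),(2,4)}"
      using edge_cases[of x y] edge_bounds[of x y] \<open>h = 4\<close> by auto
  qed
  ultimately show ?thesis
    using e13 e24 by auto
qed

lemma J2_or_Q_if_triples_outer_only:
  assumes "quads_uniform E" "1 < h"
  shows "E = {(1,h)} \<or> (h = 4 \<and> E = {(1,3),(2,4)}) \<or> (h = 4 \<and> E = {(1,4),(2,3)})"
proof -
  obtain c where c: "(1,c) \<in> E"
    using first_edge \<open>1 < h\<close> by auto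
  then have "c \<le> h"
    using edge_bounds by blast
  then consider "c = h" | "c < h"
    by linarith
  then show ?thesis
  proof cases
    case 1
    then show ?thesis
      using single_edge_or_Q2_if_spanning_edge[OF assms(1)] c by auto
  next
    case 2
    then show ?thesis
      using Q1_if_Q1_edges Q1_edges_if_short_first_edge[OF assms(1) c] by blast
  qed
qed

end

lemma complete_if_order_le_2:
  assumes "h \<le> 2"
  shows "E = {(i,j). 1 \<le> i \<and> i < j \<and> j \<le> h}"
proof
  show "{(i,j). 1 \<le> i \<and> i < j \<and> j \<le> h} \<subseteq> E"
  proof
    fix p
    assume "p \<in> {(i,j). 1 \<le> i \<and> i < j \<and> j \<le> h}"
    then have "p = (1,2)" "1 < h"
      using assms by auto
    moreover obtain c where c: "(1,c) \<in> E"
      using first_edge[OF \<open>1 < h\<close>] .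
    moreover have "c = 2"
      using edge_bounds[OF c] assms by auto
    ultimately show "p \<in> E"
      by simp
  qed
qed (use edge_bounds in auto)

theorem in_Jfam_if_uniform:
  assumes triples: "triples_uniform E" and quads: "quads_uniform E" and "1 \<le> h"
  shows "(h, E) \<in> Jfam"
proof -
  have J: "J1 h \<in> Jfam" "J2 h \<in> Jfam" "J3 h \<in> Jfam" "J4 h \<in> Jfam" "Lg h \<in> Jfam"
      "Q1 \<in> Jfam" "Q2 \<in> Jfam"
    unfolding Jfam_def using \<open>1 \<le> h\<close> by auto
  consider "h \<le> 2" | "3 \<le> h"
    by linarith
  then show ?thesis
  proof cases
    case 1
    then show ?thesis
      using complete_if_order_le_2 J(1) by (simp add: J1_def)
  next
    case 2
    obtain a0 b0 c0 where t0: "a0 < b0" "b0 < c0" "triple_irred E a0 b0 c0"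
      using irreducible_triple_exists[OF 2] .
    have "triples_have_pattern E (triple_pattern E a0 b0 c0)"
      using triples t0 unfolding triples_uniform_def triples_have_pattern_def by blast
    then obtain p q r where pqr: "triples_have_pattern E (p, q, r)"
      by (cases "triple_pattern E a0 b0 c0") auto
    then have "(p \<or> q) \<and> (q \<or> r)"
      using t0 by (auto simp: triples_have_pattern_def triple_pattern_def triple_irred_def)
    then consider "p \<and> q \<and> r" | "p \<and> \<not> q \<and> r" | "p \<and> q \<and> \<not> r" | "\<not> p \<and> q \<and> r"
      | "\<not> p \<and> q \<and> \<not> r"
      by blast
    then show ?thesis
    proof cases
      case 1
      then show ?thesis
        using complete_if_triples_complete pqr J(1) by (simp add: J1_def)
    next
      case 2
      then show ?thesis
        using path_if_triples_without_outer_edge pqr J(5) by (simp add: Lg_def)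
    next
      case 3
      then show ?thesis
        using star_left_if_triples_left pqr J(3) by (simp add: J3_def)
    next
      case 4
      then show ?thesis
        using star_right_if_triples_right pqr J(4) by (simp add: J4_def)
    next
      case 5
      then have "triples_have_pattern E (False, True, False)"
        using pqr by simp
      then show ?thesis
        using J2_or_Q_if_triples_outer_only[OF _ quads] J \<open>3 \<le> h\<close>
        by (auto simp: J2_def Q1_def Q2_def)
    qed
  qed
qed

end

section \<open>Counting irreducible induced subgraphs\<close>

definition ind_subgraphs :: "ograph \<Rightarrow> nat \<Rightarrow> ograph set" where
  "ind_subgraphs G n = {induced G S | S. S \<subseteq> {1..ord_of G} \<and> card S = n}"

definition irred_ind_subgraphs :: "ograph \<Rightarrow> nat \<Rightarrow> ograph set" where
  "irred_ind_subgraphs G n = {H \<in> ind_subgraphs G n. irreducible_og H}"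

lemma S_count_eq_card_ind_subgraphs: "S_count n G = card (ind_subgraphs G n)"
  by (simp add: S_count_def ind_subgraphs_def)

lemma finite_ind_subgraphs: "finite (ind_subgraphs G n)"
proof -
  have "ind_subgraphs G n \<subseteq> induced G ` Pow {1..ord_of G}"
    unfolding ind_subgraphs_def by blast
  then show ?thesis
    by (rule finite_subset) simp
qed

lemma finite_irred_ind_subgraphs: "finite (irred_ind_subgraphs G n)"
  using finite_ind_subgraphs by (simp add: irred_ind_subgraphs_def)

lemma ind_subgraphs_0: "ind_subgraphs G 0 = {(0, {})}"
proof -
  have "S \<subseteq> {1..ord_of G} \<and> card S = 0 \<longleftrightarrow> S = {}" for S :: "nat set"
    using finite_subset[of S "{1..ord_of G}"] by auto
  then show ?thesis
    unfolding ind_subgraphs_def by simp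
qed

lemma ind_subgraphsI:
  "S \<subseteq> {1..ord_of G} \<Longrightarrow> card S = n \<Longrightarrow> induced G S \<in> ind_subgraphs G n"
  unfolding ind_subgraphs_def by blast

lemma
  assumes "H \<in> ind_subgraphs G n" "is_ograph G"
  shows is_ograph_ind_subgraphs: "is_ograph H"
    and ord_of_ind_subgraphs: "ord_of H = n"
proof -
  obtain S where "H = induced G S" "S \<subseteq> {1..ord_of G}" "card S = n"
    using assms(1) unfolding ind_subgraphs_def by blast
  then show "is_ograph H" "ord_of H = n"
    using is_ograph_induced[OF assms(2)] finite_subset by auto
qed

lemma ind_subgraphs_empty_if_gt_ord:
  assumes "ord_of G < n"
  shows "ind_subgraphs G n = {}"
proof -
  have "card S < n" if "S \<subseteq> {1..ord_of G}" for S
    using card_mono[OF _ that] assms by simp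
  then show ?thesis
    unfolding ind_subgraphs_def by auto
qed

lemma irred_edges_of_ograph:
  assumes "is_ograph A" "irreducible_og A"
  shows "irred_edges (edges A) (ord_of A)"
  using assms unfolding is_ograph_def irreducible_og_iff by unfold_locales fastforce+

lemma induced_triple_mem_irred_ind_subgraphs:
  assumes "is_ograph A" "a < b" "b < c" "triple_irred (edges A) a b c"
  shows "induced A {a,b,c} \<in> irred_ind_subgraphs A 3"
proof -
  have "1 \<le> a" "c \<le> ord_of A"
    using assms(1,4) unfolding is_ograph_def triple_irred_def by auto
  then have "induced A {a,b,c} \<in> ind_subgraphs A 3"
    using assms(2,3) by (intro ind_subgraphsI) auto
  then show ?thesis
    using irreducible_induced_triple_iff assms by (simp add: irred_ind_subgraphs_def)
qed

lemma induced_quad_mem_irred_ind_subgraphs: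
  assumes "is_ograph A" "a < b" "b < c" "c < d" "quad_irred (edges A) a b c d"
  shows "induced A {a,b,c,d} \<in> irred_ind_subgraphs A 4"
proof -
  have "1 \<le> a" "d \<le> ord_of A"
    using assms(1,5) unfolding is_ograph_def quad_irred_def by auto
  then have "induced A {a,b,c,d} \<in> ind_subgraphs A 4"
    using assms(2-4) by (intro ind_subgraphsI) auto
  then show ?thesis
    using irreducible_induced_quad_iff assms by (simp add: irred_ind_subgraphs_def)
qed

lemma triples_uniform_if_card_le_1:
  assumes "is_ograph A" "card (irred_ind_subgraphs A 3) \<le> 1"
  shows "triples_uniform (edges A)"
  unfolding triples_uniform_def
proof clarify
  fix a b c a' b' c'
  assume "a < b" "b < c" "a' < b'" "b' < c'"
    and "triple_irred (edges A) a b c" "triple_irred (edges A) a' b' c'"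
  then have "induced A {a,b,c} = induced A {a',b',c'}"
    using induced_triple_mem_irred_ind_subgraphs[OF assms(1)] assms(2)
      card_le_Suc0_iff_eq[OF finite_irred_ind_subgraphs] by auto
  then show "triple_pattern (edges A) a b c = triple_pattern (edges A) a' b' c'"
    using triple_pattern_eq_induced \<open>a < b\<close> \<open>b < c\<close> \<open>a' < b'\<close> \<open>b' < c'\<close> by metis
qed

lemma quads_uniform_if_card_le_1:
  assumes "is_ograph A" "card (irred_ind_subgraphs A 4) \<le> 1"
  shows "quads_uniform (edges A)"
  unfolding quads_uniform_def
proof clarify
  fix a b c d a' b' c' d'
  assume "a < b" "b < c" "c < d" "a' < b'" "b' < c'" "c' < d'"
    and "quad_irred (edges A) a b c d" "quad_irred (edges A) a' b' c' d'"
  then have "induced A {a,b,c,d} = induced A {a',b',c',d'}"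
    using induced_quad_mem_irred_ind_subgraphs[OF assms(1)] assms(2)
      card_le_Suc0_iff_eq[OF finite_irred_ind_subgraphs] by auto
  then show "quad_pattern (edges A) a b c d = quad_pattern (edges A) a' b' c' d'"
    using quad_pattern_eq_induced \<open>a < b\<close> \<open>b < c\<close> \<open>c < d\<close> \<open>a' < b'\<close> \<open>b' < c'\<close> \<open>c' < d'\<close>
    by metis
qed

theorem in_Jfam_if_few_irreducible_subgraphs:
  assumes "is_ograph A" "irreducible_og A" "1 \<le> ord_of A"
    and "card (irred_ind_subgraphs A 3) \<le> 1" "card (irred_ind_subgraphs A 4) \<le> 1"
  shows "A \<in> Jfam"
proof -
  interpret irred_edges "edges A" "ord_of A"
    using irred_edges_of_ograph assms(1,2) .
  have "(ord_of A, edges A) \<in> Jfam"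
    using in_Jfam_if_uniform triples_uniform_if_card_le_1 quads_uniform_if_card_le_1 assms by blast
  then show ?thesis
    by (simp add: ograph_eq[symmetric])
qed

lemma one_le_card_irred_ind_subgraphs:
  "H \<in> irred_ind_subgraphs A n \<Longrightarrow> 1 \<le> card (irred_ind_subgraphs A n)"
  using finite_irred_ind_subgraphs by (metis One_nat_def Suc_leI card_gt_0_iff empty_iff)

lemma card_irred_ind_subgraphs_if_not_Jfam:
  assumes A: "is_ograph A" "irreducible_og A" "1 \<le> ord_of A" and "A \<notin> Jfam"
  shows "1 \<le> card (irred_ind_subgraphs A 1)" "1 \<le> card (irred_ind_subgraphs A 2)"
    and "2 \<le> card (irred_ind_subgraphs A 3) \<or>
      1 \<le> card (irred_ind_subgraphs A 3) \<and> 2 \<le> card (irred_ind_subgraphs A 4)"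
proof -
  interpret irred_edges "edges A" "ord_of A"
    using irred_edges_of_ograph A(1,2) .
  have many: "2 \<le> card (irred_ind_subgraphs A 3) \<or> 2 \<le> card (irred_ind_subgraphs A 4)"
    using in_Jfam_if_few_irreducible_subgraphs A \<open>A \<notin> Jfam\<close> by fastforce
  have "3 \<le> ord_of A"
  proof (rule ccontr)
    assume "\<not> 3 \<le> ord_of A"
    then have "irred_ind_subgraphs A 3 = {}" "irred_ind_subgraphs A 4 = {}"
      using ind_subgraphs_empty_if_gt_ord by (simp_all add: irred_ind_subgraphs_def)
    then show False
      using many by simp
  qed
  show "1 \<le> card (irred_ind_subgraphs A 1)"
    using A(3) irreducible_induced_singleton[of A 1]
    by (intro one_le_card_irred_ind_subgraphs[of "induced A {1}"])
      (simp add: irred_ind_subgraphs_def ind_subgraphsI)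
  obtain c where c: "(1,c) \<in> edges A"
    using first_edge \<open>3 \<le> ord_of A\<close> by auto
  then show "1 \<le> card (irred_ind_subgraphs A 2)"
    using edge_bounds[OF c] irreducible_induced_edge[OF c]
    by (intro one_le_card_irred_ind_subgraphs[of "induced A {1,c}"])
      (simp add: irred_ind_subgraphs_def ind_subgraphsI)
  obtain a b c where "a < b" "b < c" "triple_irred (edges A) a b c"
    using irreducible_triple_exists \<open>3 \<le> ord_of A\<close> by blast
  then have "1 \<le> card (irred_ind_subgraphs A 3)"
    using induced_triple_mem_irred_ind_subgraphs A(1) one_le_card_irred_ind_subgraphs by blast
  then show "2 \<le> card (irred_ind_subgraphs A 3) \<or>
      1 \<le> card (irred_ind_subgraphs A 3) \<and> 2 \<le> card (irred_ind_subgraphs A 4)"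
    using many by auto
qed

section \<open>Induced subgraphs of ordered sums\<close>

lemma osum_mem_ind_subgraphs:
  assumes A: "is_ograph A" and B: "is_ograph B"
    and "P \<in> ind_subgraphs A t" "Y \<in> ind_subgraphs B m"
  shows "osum P Y \<in> ind_subgraphs (osum A B) (t + m)"
proof -
  obtain S where S: "P = induced A S" "S \<subseteq> {1..ord_of A}" "card S = t"
    using assms(3) unfolding ind_subgraphs_def by blast
  obtain R where R: "Y = induced B R" "R \<subseteq> {1..ord_of B}" "card R = m"
    using assms(4) unfolding ind_subgraphs_def by blast
  define U where "U = S \<union> (\<lambda>x. x + ord_of A) ` R"
  have "finite R" "0 \<notin> R"
    using R(2) finite_subset by auto
  then have "card U = t + m"
    using card_Un_shift[OF S(2)] S(3) R(3) unfolding U_def by simp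
  moreover have "U \<subseteq> {1..ord_of (osum A B)}"
    unfolding U_def using S(2) R(2) by (force simp: subset_iff)
  moreover have "induced (osum A B) U = osum P Y"
    unfolding U_def S(1) R(1) using induced_osum[OF A B S(2) R(2)] .
  ultimately show ?thesis
    using ind_subgraphsI by metis
qed

lemma ind_subgraphs_osum_right:
  assumes "is_ograph A" "is_ograph B"
  shows "ind_subgraphs B n \<subseteq> ind_subgraphs (osum A B) n"
  using osum_mem_ind_subgraphs[OF assms, of "(0, {})" 0] ind_subgraphs_0 by auto

lemma irred_ind_subgraphsD:
  assumes "is_ograph A" "P \<in> irred_ind_subgraphs A t"
  shows "is_ograph P" "irreducible_og P" "ord_of P = t"
proof -
  have "P \<in> ind_subgraphs A t" "irreducible_og P"
    using assms(2) by (simp_all add: irred_ind_subgraphs_def)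
  then show "is_ograph P" "irreducible_og P" "ord_of P = t"
    using is_ograph_ind_subgraphs[OF _ assms(1)] ord_of_ind_subgraphs[OF _ assms(1)] by auto
qed

lemma inj_on_osum_irreducible:
  "inj_on (\<lambda>(P,Y). osum P Y) {(P,Y). is_ograph P \<and> irreducible_og P \<and> 1 \<le> ord_of P \<and> is_ograph Y}"
proof (rule inj_onI, clarify)
  fix P Y P' Y'
  assume "is_ograph P" "irreducible_og P" "1 \<le> ord_of P" "is_ograph Y"
    and "is_ograph P'" "irreducible_og P'" "1 \<le> ord_of P'" "is_ograph Y'"
    and "osum P Y = osum P' Y'"
  then show "P = P' \<and> Y = Y'"
    using osum_irreducible_cancel[of P P' Y Y'] by blast
qed

lemma card_ind_subgraphs_osum_ge:
  assumes A: "is_ograph A" and B: "is_ograph B"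
  shows "(\<Sum>t=1..n. card (irred_ind_subgraphs A t) * card (ind_subgraphs B (n - t)))
    \<le> card (ind_subgraphs (osum A B) n)"
proof -
  define D where "D = (\<Union>t\<in>{1..n}. irred_ind_subgraphs A t \<times> ind_subgraphs B (n - t))"
  have "D \<subseteq> {(P,Y). is_ograph P \<and> irreducible_og P \<and> 1 \<le> ord_of P \<and> is_ograph Y}"
  proof clarify
    fix P Y
    assume "(P,Y) \<in> D"
    then obtain t where t: "t \<in> {1..n}" "P \<in> irred_ind_subgraphs A t" "Y \<in> ind_subgraphs B (n - t)"
      unfolding D_def by blast
    then show "is_ograph P \<and> irreducible_og P \<and> 1 \<le> ord_of P \<and> is_ograph Y"
      using irred_ind_subgraphsD[OF A t(2)] is_ograph_ind_subgraphs[OF t(3) B] by simp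
  qed
  then have "inj_on (\<lambda>(P,Y). osum P Y) D"
    by (rule inj_on_subset[OF inj_on_osum_irreducible])
  moreover have "(\<lambda>(P,Y). osum P Y) ` D \<subseteq> ind_subgraphs (osum A B) n"
  proof (rule image_subsetI, clarify)
    fix P Y
    assume "(P,Y) \<in> D"
    then obtain t where t: "t \<in> {1..n}" "P \<in> irred_ind_subgraphs A t" "Y \<in> ind_subgraphs B (n - t)"
      unfolding D_def by blast
    have "P \<in> ind_subgraphs A t"
      using t(2) by (simp add: irred_ind_subgraphs_def)
    then have "osum P Y \<in> ind_subgraphs (osum A B) (t + (n - t))"
      using osum_mem_ind_subgraphs[OF A B _ t(3)] by blast
    then show "osum P Y \<in> ind_subgraphs (osum A B) n"
      using t(1) by simp
  qed
  ultimately have "card D \<le> card (ind_subgraphs (osum A B) n)"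
    using card_inj_on_le finite_ind_subgraphs by blast
  moreover have "card D = (\<Sum>t=1..n. card (irred_ind_subgraphs A t) * card (ind_subgraphs B (n - t)))"
    unfolding D_def
  proof (subst card_UN_disjoint)
    show "\<forall>t\<in>{1..n}. \<forall>t'\<in>{1..n}. t \<noteq> t' \<longrightarrow>
        (irred_ind_subgraphs A t \<times> ind_subgraphs B (n - t)) \<inter>
        (irred_ind_subgraphs A t' \<times> ind_subgraphs B (n - t')) = {}"
      using irred_ind_subgraphsD(3)[OF A] by blast
  qed (simp_all add: finite_irred_ind_subgraphs finite_ind_subgraphs card_cartesian_product)
  ultimately show ?thesis
    by simp
qed

lemma two_pow_le_weighted_sum:
  fixes c :: "nat \<Rightarrow> nat"
  assumes c1: "1 \<le> c 1" and c2: "1 \<le> c 2" and c34: "2 \<le> c 3 \<or> 1 \<le> c 3 \<and> 2 \<le> c 4"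
    and "1 \<le> n"
  shows "2 ^ (n - 1) \<le> (\<Sum>t=1..n. c t * 2 ^ (n - t - 1))"
proof -
  consider "n = 1 \<or> n = 2 \<or> n = 3 \<or> n = 4" | k where "n = k + 5"
  proof (cases "n \<le> 4")
    case False
    then show ?thesis
      using that(2)[of "n - 5"] by simp
  qed (use \<open>1 \<le> n\<close> that(1) in linarith)
  then show ?thesis
  proof cases
    case 1
    have "(\<Sum>t=1..1. c t * 2 ^ (1 - t - 1)) = c 1"
      "(\<Sum>t=1..2. c t * 2 ^ (2 - t - 1)) = c 1 + c 2"
      "(\<Sum>t=1..3. c t * 2 ^ (3 - t - 1)) = 2 * c 1 + c 2 + c 3"
      "(\<Sum>t=1..4. c t * 2 ^ (4 - t - 1)) = 4 * c 1 + 2 * c 2 + c 3 + c 4"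
      by (simp_all add: sum.atLeast_Suc_atMost numeral_eq_Suc)
    then show ?thesis
      using 1 c1 c2 c34 by auto
  next
    case 2
    have "(\<Sum>t\<in>{1,2,3,4}. c t * 2 ^ (n - t - 1)) \<le> (\<Sum>t=1..n. c t * 2 ^ (n - t - 1))"
      using \<open>n = k + 5\<close> by (intro sum_mono2) auto
    moreover have "(\<Sum>t\<in>{1,2,3,4}. c t * 2 ^ (n - t - 1))
        = c 1 * (8 * 2 ^ k) + c 2 * (4 * 2 ^ k) + (2 * c 3 + c 4) * 2 ^ k"
      using \<open>n = k + 5\<close> by (simp add: power_add algebra_simps)
    moreover have "8 * 2 ^ k \<le> c 1 * (8 * 2 ^ k)" "4 * 2 ^ k \<le> c 2 * (4 * 2 ^ k)"
      "4 * 2 ^ k \<le> (2 * c 3 + c 4) * (2::nat) ^ k"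
      using mult_le_mono1[OF c1, of "8 * 2 ^ k"] mult_le_mono1[OF c2, of "4 * 2 ^ k"]
        mult_le_mono1[of 4 "2 * c 3 + c 4" "2 ^ k"] c34 by auto
    moreover have "2 ^ (n - 1) = 16 * (2::nat) ^ k"
      using \<open>n = k + 5\<close> by (simp add: power_add)
    ultimately show ?thesis
      by linarith
  qed
qed

lemma two_pow_le_convolution:
  fixes a c :: "nat \<Rightarrow> nat"
  assumes "1 \<le> c 1" "1 \<le> c 2" "2 \<le> c 3 \<or> 1 \<le> c 3 \<and> 2 \<le> c 4"
    and "1 \<le> n" and a: "\<And>m. m < n \<Longrightarrow> 2 ^ (m - 1) \<le> a m"
  shows "2 ^ (n - 1) \<le> (\<Sum>t=1..n. c t * a (n - t))"
proof -
  have "2 ^ (n - t - 1) \<le> a (n - t)" if "t \<in> {1..n}" for t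
    using a[of "n - t"] that by simp
  then have "(\<Sum>t=1..n. c t * 2 ^ (n - t - 1)) \<le> (\<Sum>t=1..n. c t * a (n - t))"
    by (intro sum_mono mult_le_mono2)
  then show ?thesis
    using two_pow_le_weighted_sum[OF assms(1-4)] by linarith
qed

lemma card_ind_subgraphs_0: "card (ind_subgraphs G 0) = 1"
  by (simp add: ind_subgraphs_0)

lemma card_ind_subgraphs_osum_list_ge:
  assumes "\<forall>H\<in>set Gs. is_ograph H \<and> 1 \<le> ord_of H \<and> irreducible_og H"
    and "n \<le> length (filter (\<lambda>H. H \<notin> Jfam) Gs)"
  shows "2 ^ (n - 1) \<le> card (ind_subgraphs (osum_list Gs) n)"
  using assms
proof (induction Gs arbitrary: n)
  case Nil
  then show ?case
    by (simp add: card_ind_subgraphs_0)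
next
  case (Cons A Gs)
  define B where "B = osum_list Gs"
  have A: "is_ograph A" "1 \<le> ord_of A" "irreducible_og A" and B: "is_ograph B"
    using Cons.prems(1) is_ograph_osum_list unfolding B_def by auto
  have IH: "2 ^ (m - 1) \<le> card (ind_subgraphs B m)"
    if "m \<le> length (filter (\<lambda>H. H \<notin> Jfam) Gs)" for m
    using Cons.IH Cons.prems(1) that unfolding B_def by simp
  show ?case
  proof (cases "A \<in> Jfam")
    case True
    then have "2 ^ (n - 1) \<le> card (ind_subgraphs B n)"
      using IH Cons.prems(2) by simp
    also have "\<dots> \<le> card (ind_subgraphs (osum A B) n)"
      using ind_subgraphs_osum_right[OF A(1) B] finite_ind_subgraphs by (rule card_mono[rotated])
    finally show ?thesis
      by (simp add: B_def)
  next
    case False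
    show ?thesis
    proof (cases "n = 0")
      case False
      have "2 ^ (n - 1) \<le>
          (\<Sum>t=1..n. card (irred_ind_subgraphs A t) * card (ind_subgraphs B (n - t)))"
        using card_irred_ind_subgraphs_if_not_Jfam[OF A(1,3,2) \<open>A \<notin> Jfam\<close>] False
          IH Cons.prems(2) \<open>A \<notin> Jfam\<close>
        by (intro two_pow_le_convolution) auto
      also have "\<dots> \<le> card (ind_subgraphs (osum A B) n)"
        using card_ind_subgraphs_osum_ge[OF A(1) B] .
      finally show ?thesis
        by (simp add: B_def)
    qed (simp add: card_ind_subgraphs_0)
  qed
qed

theorem lemma19:
  fixes k m :: nat and G :: ograph and Gs :: "ograph list"
  assumes "block_decomp G Gs"
    and "length Gs = m"
    and "card {i. i < m \<and> Gs ! i \<notin> Jfam} \<ge> k"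
  shows "\<forall>n \<le> k. S_count n G \<ge> 2 ^ (n - 1)"
proof (intro allI impI)
  fix n
  assume "n \<le> k"
  have blocks: "\<forall>H\<in>set Gs. is_ograph H \<and> 1 \<le> ord_of H \<and> irreducible_og H"
    and G: "G = osum_list Gs"
    using assms(1) unfolding block_decomp_def by auto
  have "card {i. i < m \<and> Gs ! i \<notin> Jfam} = length (filter (\<lambda>H. H \<notin> Jfam) Gs)"
    using assms(2) by (simp add: length_filter_conv_card)
  then have "n \<le> length (filter (\<lambda>H. H \<notin> Jfam) Gs)"
    using \<open>n \<le> k\<close> assms(3) by simp
  then show "S_count n G \<ge> 2 ^ (n - 1)"
    using card_ind_subgraphs_osum_list_ge[OF blocks] G
    by (simp add: S_count_eq_card_ind_subgraphs)
qed

end
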